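(* Consider a bipartite system with OPF sets $\mathcal F_{d_{\sf A}}$, $\mathcal F_{d_{\sf B}}$, $\mathcal F_{d_{\sf A}d_{\sf B}}$ and affine representations $\Gamma^{d_{\sf A}}$, $\Gamma^{d_{\sf B}}$, $\Gamma^{d_{\sf A}d_{\sf B}}$. If the restriction of $\Gamma^{d_{\sf A}d_{\sf B}}$ to $\mathrm{SU}(d_{\sf A})\times\mathrm{SU}(d_{\sf B})$ (embedded as $U_{\sf A}\otimes U_{\sf B}$) contains a subrepresentation $1^{d_{\sf A}}\boxtimes1^{d_{\sf B}}$, then the composite system is holistic, i.e. not locally tomographic: for bases $\{F^i_{\sf A}\}$ of $V_{d_{\sf A}}$ and $\{F^j_{\sf B}\}$ of $V_{d_{\sf B}}$, $\{F^i_{\sf A}\star F^j_{\sf B}\}_{i,j}$ is not a basis of $V_{d_{\sf A}d_{\sf B}}$.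
   Context: An OPF on $\mathbb C^d$ is a function from rays of $\mathbb C^d$ to $[0,1]$; $\mathcal F_d$ contains the unit OPF ${\bf u}\equiv1$, satisfies (C1): $F\circ U:\psi\mapsto F(U\psi)$ is in $\mathcal F_d$ for $F\in\mathcal F_d$, $U\in\mathrm{SU}(d)$, and the Finiteness Principle: the real span $V_d$ of $\mathcal F_d$ is finite-dimensional. The associated representation $\bar\Gamma^d$ on $V_d$ is $\bar\Gamma^d(U)F=F\circ U$; it contains the trivial representation $1^d$ exactly once (spanned by ${\bf u}$), and the affine representation $\Gamma^d$ is defined by $\bar\Gamma^d=1^d\oplus\Gamma^d$. The product $\star:\mathcal F_{d_{\sf A}}\times\mathcal F_{d_{\sf B}}\to\mathcal F_{d_{\sf A}d_{\sf B}}$ is bilinear, satisfies ${\bf u}_{\sf A}\star{\bf u}_{\sf B}={\bf u}_{{\sf A}{\sf B}}$, and $(F_{\sf A}\star F_{\sf B})\circ(U_{\sf A}\otimes U_{\sf B})=(F_{\sf A}\circ U_{\sf A})\star(F_{\sf B}\circ U_{\sf B})$. $1^d$ is the trivial representation of $\mathrm{SU}(d)$ and $\boxtimes$ the outer tensor product. *)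

theory Defs
  imports "HOL-Analysis.Analysis" "HOL-Library.Function_Algebras"
begin

typedef ('d::finite) ray =
  "{S :: (complex ^ 'd) set. \<exists>\<psi>. \<psi> \<noteq> 0 \<and> S = {c *s \<psi> | c. c \<noteq> 0}}"
proof -
  have "(1::complex^'d) \<noteq> 0" by (simp add: vec_eq_iff)
  then show ?thesis by blast
qed

definition ray_act :: "complex ^ 'd ^ 'd \<Rightarrow> ('d::finite) ray \<Rightarrow> 'd ray" where
  "ray_act U r = Abs_ray ((\<lambda>\<psi>. U *v \<psi>) ` Rep_ray r)"

definition adjoint_mat :: "complex ^ 'n ^ 'm \<Rightarrow> complex ^ 'm ^ 'n" where
  "adjoint_mat U = (\<chi> i j. cnj (U $ j $ i))"

definition SU :: "(complex ^ 'd ^ 'd) set" where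
  "SU = {U. adjoint_mat U ** U = mat 1 \<and> det U = 1}"

text \<open>Kronecker product U_A (x) U_B acting on C^(d_A d_B) = C^{d_A} (x) C^{d_B}.\<close>
definition kron :: "complex ^ 'a ^ 'a \<Rightarrow> complex ^ 'b ^ 'b \<Rightarrow> complex ^ ('a \<times> 'b) ^ ('a \<times> 'b)" where
  "kron UA UB = (\<chi> p q. UA $ fst p $ fst q * UB $ snd p $ snd q)"

type_synonym 'd opf = "'d ray \<Rightarrow> real"

definition unit_opf :: "('d::finite) opf" ("\<u>") where
  "unit_opf = (\<lambda>_. 1)"

definition opf_comp :: "('d::finite) opf \<Rightarrow> complex ^ 'd ^ 'd \<Rightarrow> 'd opf" where
  "opf_comp F U = (\<lambda>r. F (ray_act U r))"

definition fscale :: "real \<Rightarrow> ('x \<Rightarrow> real) \<Rightarrow> ('x \<Rightarrow> real)" where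
  "fscale c f = (\<lambda>x. c * f x)"

definition fspan :: "('x \<Rightarrow> real) set \<Rightarrow> ('x \<Rightarrow> real) set" where
  "fspan = module.span fscale"

definition findependent :: "('x \<Rightarrow> real) set \<Rightarrow> bool" where
  "findependent S = (\<not> module.dependent fscale S)"

definition fsubspace :: "('x \<Rightarrow> real) set \<Rightarrow> bool" where
  "fsubspace = module.subspace fscale"

definition fbasis :: "('x \<Rightarrow> real) set \<Rightarrow> ('x \<Rightarrow> real) set \<Rightarrow> bool" where
  "fbasis S V = (S \<subseteq> V \<and> findependent S \<and> fspan S = V)"

text \<open>Standing assumptions on an OPF set F_d: OPFs take values in [0,1], the unit OPF
  belongs to F_d, (C1) invariance under SU(d), and the Finiteness Principle.\<close>
definition OPF_set :: "('d::finite) opf set \<Rightarrow> bool" where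
  "OPF_set F \<longleftrightarrow>
     (\<forall>G\<in>F. \<forall>r. 0 \<le> G r \<and> G r \<le> 1) \<and>
     \<u> \<in> F \<and>
     (\<forall>G\<in>F. \<forall>U\<in>SU. opf_comp G U \<in> F) \<and>
     (\<exists>B. finite B \<and> fspan B = fspan F)"

text \<open>The associated representation on V_d = span F_d contains the trivial representation
  exactly once (spanned by u): the SU(d)-invariant vectors of V_d are exactly span {u}.\<close>
definition trivial_once :: "('d::finite) opf set \<Rightarrow> bool" where
  "trivial_once F \<longleftrightarrow>
     {G \<in> fspan F. \<forall>U\<in>SU. opf_comp G U = G} = fspan {\<u>}"

text \<open>W carries the affine representation Gamma^d: W is an SU(d)-invariant subspace of V_d
  complementary to span {u}, so that the associated representation is 1^d (+) Gamma^d.\<close>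
definition affine_rep_space :: "('d::finite) opf set \<Rightarrow> 'd opf set \<Rightarrow> bool" where
  "affine_rep_space F W \<longleftrightarrow>
     fsubspace W \<and> W \<subseteq> fspan F \<and> \<u> \<notin> W \<and> fspan (insert \<u> W) = fspan F \<and>
     (\<forall>G\<in>W. \<forall>U\<in>SU. opf_comp G U \<in> W)"

definition OPF_product ::
  "('a::finite) opf set \<Rightarrow> ('b::finite) opf set \<Rightarrow> ('a \<times> 'b) opf set
   \<Rightarrow> ('a opf \<Rightarrow> 'b opf \<Rightarrow> ('a \<times> 'b) opf) \<Rightarrow> bool" where
  "OPF_product FA FB FAB star \<longleftrightarrow>
     (\<forall>F\<in>FA. \<forall>G\<in>FB. star F G \<in> FAB) \<and>
     (\<forall>F1\<in>fspan FA. \<forall>F2\<in>fspan FA. \<forall>G\<in>fspan FB. \<forall>a b.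
        star (\<lambda>r. a * F1 r + b * F2 r) G = (\<lambda>r. a * star F1 G r + b * star F2 G r)) \<and>
     (\<forall>F\<in>fspan FA. \<forall>G1\<in>fspan FB. \<forall>G2\<in>fspan FB. \<forall>a b.
        star F (\<lambda>r. a * G1 r + b * G2 r) = (\<lambda>r. a * star F G1 r + b * star F G2 r)) \<and>
     star \<u> \<u> = \<u> \<and>
     (\<forall>F\<in>FA. \<forall>G\<in>FB. \<forall>UA\<in>SU. \<forall>UB\<in>SU.
        opf_comp (star F G) (kron UA UB) = star (opf_comp F UA) (opf_comp G UB))"

end

theory Submission
  imports Defs
begin

text \<open>If the products of basis OPFs formed a basis of the composite space, the product would
  identify it with the algebraic tensor product of the local spaces, equivariantly for
  \<open>U\<^sub>A \<otimes> U\<^sub>B\<close>. Expanding an invariant \<open>G\<close> in that basis as \<open>\<Sum>\<^sub>j A\<^sub>j \<star> F\<^sup>j\<^sub>B\<close>, uniqueness of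
  the coefficients and invariance under \<open>U\<^sub>A \<otimes> 1\<close> make every \<open>A\<^sub>j\<close> an \<open>SU(d\<^sub>A)\<close>-invariant, hence a
  multiple of \<open>\<u>\<close>; so \<open>G = \<u> \<star> H\<close>, and invariance under \<open>1 \<otimes> U\<^sub>B\<close> makes \<open>H\<close> a multiple of \<open>\<u>\<close>.
  Thus \<open>G\<close> is a multiple of \<open>\<u> \<star> \<u> = \<u>\<close>, which cannot lie in the affine part unless \<open>G = 0\<close>.\<close>

instantiation "fun" :: (type, real_vector) real_vector
begin
definition scaleR_fun :: "real \<Rightarrow> ('a \<Rightarrow> 'b) \<Rightarrow> 'a \<Rightarrow> 'b" where
  "scaleR_fun c f = (\<lambda>x. c *\<^sub>R f x)"
instance by standard (auto simp: scaleR_fun_def fun_eq_iff scaleR_add_right scaleR_add_left)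
end

lemma fscale_eq_scaleR: "fscale = (scaleR :: real \<Rightarrow> ('x \<Rightarrow> real) \<Rightarrow> _)"
  by (auto simp: fun_eq_iff fscale_def scaleR_fun_def)

lemma fspan_eq_span: "fspan = (span :: ('x \<Rightarrow> real) set \<Rightarrow> _)"
  unfolding fspan_def span_raw_def fscale_eq_scaleR ..

lemma findependent_eq_independent: "findependent = (independent :: ('x \<Rightarrow> real) set \<Rightarrow> _)"
  unfolding findependent_def dependent_raw_def fscale_eq_scaleR ..

lemma fsubspace_eq_subspace: "fsubspace = (subspace :: ('x \<Rightarrow> real) set \<Rightarrow> _)"
  unfolding fsubspace_def subspace_raw_def fscale_eq_scaleR ..

lemma fbasis_iff: "fbasis S V \<longleftrightarrow> independent S \<and> span S = V"
  unfolding fbasis_def fspan_eq_span findependent_eq_independent by (auto intro: span_base)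

lemma linear_combination_fun_eq: "(\<lambda>r. a * f r + b * g r) = a *\<^sub>R f + b *\<^sub>R g"
  by (simp add: fun_eq_iff scaleR_fun_def)

section \<open>Maps that are bilinear on a pair of subspaces\<close>

locale bilinear_on =
  fixes VA :: "'a::real_vector set" and VB :: "'b::real_vector set"
    and star :: "'a \<Rightarrow> 'b \<Rightarrow> 'c::real_vector"
  assumes subspace_left: "subspace VA" and subspace_right: "subspace VB"
    and linear_left: "\<lbrakk>x \<in> VA; x' \<in> VA; y \<in> VB\<rbrakk> \<Longrightarrow>
      star (a *\<^sub>R x + b *\<^sub>R x') y = a *\<^sub>R star x y + b *\<^sub>R star x' y"
    and linear_right: "\<lbrakk>x \<in> VA; y \<in> VB; y' \<in> VB\<rbrakk> \<Longrightarrow>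
      star x (a *\<^sub>R y + b *\<^sub>R y') = a *\<^sub>R star x y + b *\<^sub>R star x y'"
begin

lemma scaleR_left: "x \<in> VA \<Longrightarrow> y \<in> VB \<Longrightarrow> star (c *\<^sub>R x) y = c *\<^sub>R star x y"
  using linear_left[of x x y c 0] by simp

lemma scaleR_right: "x \<in> VA \<Longrightarrow> y \<in> VB \<Longrightarrow> star x (c *\<^sub>R y) = c *\<^sub>R star x y"
  using linear_right[of x y y c 0] by simp

lemma zero_left: "y \<in> VB \<Longrightarrow> star 0 y = 0"
  using scaleR_left[of 0 y 0] subspace_left by (simp add: subspace_0)

lemma zero_right: "x \<in> VA \<Longrightarrow> star x 0 = 0"
  using scaleR_right[of x 0 0] subspace_right by (simp add: subspace_0)

lemma diff_left: "x \<in> VA \<Longrightarrow> x' \<in> VA \<Longrightarrow> y \<in> VB \<Longrightarrow> star (x - x') y = star x y - star x' y"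
  using linear_left[of x x' y 1 "-1"] by simp

lemma diff_right: "x \<in> VA \<Longrightarrow> y \<in> VB \<Longrightarrow> y' \<in> VB \<Longrightarrow> star x (y - y') = star x y - star x y'"
  using linear_right[of x y y' 1 "-1"] by simp

lemma linear_combination_left:
  assumes "finite I" "\<And>i. i \<in> I \<Longrightarrow> x i \<in> VA" "y \<in> VB"
  shows "star (\<Sum>i\<in>I. c i *\<^sub>R x i) y = (\<Sum>i\<in>I. c i *\<^sub>R star (x i) y)"
  using assms
proof (induction I rule: finite_induct)
  case empty
  then show ?case by (simp add: zero_left)
next
  case (insert i I)
  then have "(\<Sum>i\<in>I. c i *\<^sub>R x i) \<in> VA"
    using subspace_left by (simp add: subspace_sum subspace_scale)
  with insert show ?case by (simp add: linear_left[of _ _ _ _ 1, simplified])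
qed

lemma linear_combination_right:
  assumes "finite I" "\<And>i. i \<in> I \<Longrightarrow> y i \<in> VB" "x \<in> VA"
  shows "star x (\<Sum>i\<in>I. c i *\<^sub>R y i) = (\<Sum>i\<in>I. c i *\<^sub>R star x (y i))"
  using assms
proof (induction I rule: finite_induct)
  case empty
  then show ?case by (simp add: zero_right)
next
  case (insert i I)
  then have "(\<Sum>i\<in>I. c i *\<^sub>R y i) \<in> VB"
    using subspace_right by (simp add: subspace_sum subspace_scale)
  with insert show ?case by (simp add: linear_right[of _ _ _ _ 1, simplified])
qed

lemma bilinear_on_compose:
  assumes "linear T" "linear R" "linear S" "R ` VA \<subseteq> VA" "S ` VB \<subseteq> VB"
  shows "bilinear_on VA VB (\<lambda>x y. T (star (R x) (S y)))"
proof unfold_locales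
  fix a b x x' y assume "x \<in> VA" "x' \<in> VA" "y \<in> VB"
  moreover have "R x \<in> VA" "R x' \<in> VA" "S y \<in> VB"
    using calculation assms(4,5) by auto
  ultimately show "T (star (R (a *\<^sub>R x + b *\<^sub>R x')) (S y)) =
      a *\<^sub>R T (star (R x) (S y)) + b *\<^sub>R T (star (R x') (S y))"
    using assms(1-3) by (simp add: linear_add linear_scale linear_left)
next
  fix a b x y y' assume "x \<in> VA" "y \<in> VB" "y' \<in> VB"
  moreover have "R x \<in> VA" "S y \<in> VB" "S y' \<in> VB"
    using calculation assms(4,5) by auto
  ultimately show "T (star (R x) (S (a *\<^sub>R y + b *\<^sub>R y'))) =
      a *\<^sub>R T (star (R x) (S y)) + b *\<^sub>R T (star (R x) (S y'))"
    using assms(1-3) by (simp add: linear_add linear_scale linear_right)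
qed (use subspace_left subspace_right in auto)

end

lemma bilinear_on_eq_on_spans:
  assumes f: "bilinear_on (span SA) (span SB) f" and g: "bilinear_on (span SA) (span SB) g"
    and eq: "\<And>x y. x \<in> SA \<Longrightarrow> y \<in> SB \<Longrightarrow> f x y = g x y"
    and x: "x \<in> span SA" and y: "y \<in> span SB"
  shows "f x y = g x y"
proof -
  have eq_left: "f x y = g x y" if "x \<in> span SA" "y \<in> SB" for x y
  proof -
    \<comment> \<open>membership in the span is carried along because \<open>f\<close> and \<open>g\<close> are linear only there\<close>
    have "x \<in> span SA \<and> f x y = g x y"
      using \<open>x \<in> span SA\<close>
    proof (induction rule: span_induct_alt)
      case base
      show ?case using that bilinear_on.zero_left[OF f] bilinear_on.zero_left[OF g]
        by (simp add: span_base span_zero)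
    next
      case (step c x' x)
      then show ?case using that eq
        bilinear_on.linear_left[OF f, of x' x y c 1] bilinear_on.linear_left[OF g, of x' x y c 1]
        by (simp add: span_base span_add span_scale)
    qed
    then show ?thesis ..
  qed
  have "y \<in> span SB \<and> f x y = g x y"
    using y
  proof (induction rule: span_induct_alt)
    case base
    show ?case using x bilinear_on.zero_right[OF f] bilinear_on.zero_right[OF g]
      by (simp add: span_zero)
  next
    case (step c y' y)
    then show ?case using x eq_left
      bilinear_on.linear_right[OF f, of x y' y c 1] bilinear_on.linear_right[OF g, of x y' y c 1]
      by (simp add: span_base span_add span_scale)
  qed
  then show ?thesis ..
qed

section \<open>Product bases\<close>

locale product_basis = bilinear_on +
  fixes BA :: "'a::real_vector set" and BB :: "'b::real_vector set"
  assumes finite_BA: "finite BA" and finite_BB: "finite BB"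
    and span_BA: "span BA = VA" and span_BB: "span BB = VB"
    and inj_on_products: "inj_on (\<lambda>(x, y). star x y) (BA \<times> BB)"
    and independent_products: "independent ((\<lambda>(x, y). star x y) ` (BA \<times> BB))"
begin

lemma basis_left_mem: "x \<in> BA \<Longrightarrow> x \<in> VA"
  using span_BA span_superset by blast

lemma basis_right_mem: "y \<in> BB \<Longrightarrow> y \<in> VB"
  using span_BB span_superset by blast

lemma sum_products_reindex:
  "(\<Sum>t\<in>(\<lambda>(x, y). star x y) ` (BA \<times> BB). u t *\<^sub>R t) =
   (\<Sum>(x, y)\<in>BA \<times> BB. u (star x y) *\<^sub>R star x y)"
  unfolding sum.reindex[OF inj_on_products] by (simp add: comp_def case_prod_unfold)

lemma product_coefficients_eq_zero:
  assumes sum: "(\<Sum>(x, y)\<in>BA \<times> BB. c x y *\<^sub>R star x y) = 0" and "x \<in> BA" "y \<in> BB"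
  shows "c x y = 0"
proof -
  define u where "u t = (case inv_into (BA \<times> BB) (\<lambda>(x, y). star x y) t of (x, y) \<Rightarrow> c x y)"
    for t
  have u_star: "u (star x y) = c x y" if "x \<in> BA" "y \<in> BB" for x y
    using inv_into_f_f[OF inj_on_products, of "(x, y)"] that by (simp add: u_def)
  have "(\<Sum>t\<in>(\<lambda>(x, y). star x y) ` (BA \<times> BB). u t *\<^sub>R t) = 0"
  proof -
    have "(\<Sum>(x, y)\<in>BA \<times> BB. u (star x y) *\<^sub>R star x y) =
          (\<Sum>(x, y)\<in>BA \<times> BB. c x y *\<^sub>R star x y)"
      by (rule sum.cong) (auto simp: u_star)
    then show ?thesis
      unfolding sum_products_reindex using sum by simp
  qed
  moreover have "finite ((\<lambda>(x, y). star x y) ` (BA \<times> BB))"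
    using finite_BA finite_BB by simp
  ultimately have "u t = 0" if "t \<in> (\<lambda>(x, y). star x y) ` (BA \<times> BB)" for t
    using independent_products that dependent_finite by auto
  then show ?thesis
    using assms(2,3) u_star by (metis (no_types, lifting) case_prod_conv image_eqI mem_Sigma_iff)
qed

lemma sum_star_eq_zero_imp:
  assumes D: "\<And>y. y \<in> BB \<Longrightarrow> D y \<in> VA" and sum: "(\<Sum>y\<in>BB. star (D y) y) = 0"
    and "y \<in> BB"
  shows "D y = 0"
proof -
  have "\<forall>y\<in>BB. \<exists>d. D y = (\<Sum>x\<in>BA. d x *\<^sub>R x)"
    using D span_finite[OF finite_BA] span_BA by blast
  then obtain d where d: "\<And>y. y \<in> BB \<Longrightarrow> D y = (\<Sum>x\<in>BA. d y x *\<^sub>R x)"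
    by metis
  have "star (D y) y = (\<Sum>x\<in>BA. d y x *\<^sub>R star x y)" if "y \<in> BB" for y
    using that by (simp add: d linear_combination_left[OF finite_BA basis_left_mem basis_right_mem])
  with sum have "(\<Sum>(x, y)\<in>BA \<times> BB. d y x *\<^sub>R star x y) = 0"
    by (simp add: sum.cartesian_product[symmetric] sum.swap[of _ BA])
  then have "d y x = 0" if "x \<in> BA" for x
    using product_coefficients_eq_zero[of "\<lambda>x y. d y x"] that \<open>y \<in> BB\<close> by blast
  then show ?thesis
    using d[OF \<open>y \<in> BB\<close>] by simp
qed

lemma sum_star_unique:
  assumes A: "\<And>y. y \<in> BB \<Longrightarrow> A y \<in> VA" and A': "\<And>y. y \<in> BB \<Longrightarrow> A' y \<in> VA"
    and eq: "(\<Sum>y\<in>BB. star (A y) y) = (\<Sum>y\<in>BB. star (A' y) y)" and "y \<in> BB"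
  shows "A y = A' y"
proof -
  have "(\<Sum>y\<in>BB. star (A y - A' y) y) = (\<Sum>y\<in>BB. star (A y) y - star (A' y) y)"
    by (intro sum.cong refl) (simp add: A A' basis_right_mem diff_left)
  also have "\<dots> = 0"
    using eq by (simp add: sum_subtractf)
  finally have sum: "(\<Sum>y\<in>BB. star (A y - A' y) y) = 0" .
  have "\<And>y. y \<in> BB \<Longrightarrow> A y - A' y \<in> VA"
    by (simp add: A A' subspace_left subspace_diff)
  from sum_star_eq_zero_imp[OF this sum \<open>y \<in> BB\<close>] show ?thesis by simp
qed

lemma star_right_inj:
  assumes a: "a \<in> VA" "a \<noteq> 0" and "z \<in> VB" "z' \<in> VB" and eq: "star a z = star a z'"
  shows "z = z'"
proof -
  have "z - z' \<in> span BB"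
    unfolding span_BB using \<open>z \<in> VB\<close> \<open>z' \<in> VB\<close> subspace_right by (rule subspace_diff[rotated])
  then obtain k where k: "z - z' = (\<Sum>y\<in>BB. k y *\<^sub>R y)"
    using span_finite[OF finite_BB] by auto
  have "(\<Sum>y\<in>BB. star (k y *\<^sub>R a) y) = (\<Sum>y\<in>BB. k y *\<^sub>R star a y)"
    by (intro sum.cong refl) (simp add: a basis_right_mem scaleR_left)
  also have "\<dots> = star a (z - z')"
    unfolding k by (rule linear_combination_right[OF finite_BB basis_right_mem a(1), symmetric])
  also have "\<dots> = 0"
    using a \<open>z \<in> VB\<close> \<open>z' \<in> VB\<close> eq by (simp add: diff_right)
  finally have sum: "(\<Sum>y\<in>BB. star (k y *\<^sub>R a) y) = 0" .
  have "\<And>y. y \<in> BB \<Longrightarrow> k y *\<^sub>R a \<in> VA"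
    by (simp add: a subspace_left subspace_scale)
  from sum_star_eq_zero_imp[OF this sum] have "\<forall>y\<in>BB. k y = 0"
    using a(2) by simp
  then show ?thesis
    using k by simp
qed

lemma span_products_decompose:
  assumes "G \<in> span ((\<lambda>(x, y). star x y) ` (BA \<times> BB))"
  obtains A where "\<And>y. y \<in> BB \<Longrightarrow> A y \<in> VA" "G = (\<Sum>y\<in>BB. star (A y) y)"
proof -
  obtain u where "G = (\<Sum>t\<in>(\<lambda>(x, y). star x y) ` (BA \<times> BB). u t *\<^sub>R t)"
    using assms span_finite[of "(\<lambda>(x, y). star x y) ` (BA \<times> BB)"] finite_BA finite_BB
    by auto
  also have "\<dots> = (\<Sum>y\<in>BB. \<Sum>x\<in>BA. u (star x y) *\<^sub>R star x y)"
    by (simp add: sum_products_reindex sum.cartesian_product[symmetric] sum.swap[of _ BA])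
  also have "\<dots> = (\<Sum>y\<in>BB. star (\<Sum>x\<in>BA. u (star x y) *\<^sub>R x) y)"
    by (intro sum.cong refl)
      (simp add: linear_combination_left[OF finite_BA basis_left_mem basis_right_mem])
  finally show ?thesis
    using basis_left_mem subspace_left
    by (intro that[of "\<lambda>y. \<Sum>x\<in>BA. u (star x y) *\<^sub>R x"]) (auto intro: subspace_sum subspace_scale)
qed

end

section \<open>OPFs under the special unitary group\<close>

lemma linear_opf_comp: "linear (\<lambda>F. opf_comp F U)"
  by (rule linearI) (auto simp: opf_comp_def fun_eq_iff scaleR_fun_def)

lemma opf_comp_mat_1 [simp]: "opf_comp F (mat 1) = F"
  unfolding opf_comp_def ray_act_def by (simp add: Rep_ray_inverse)

lemma mat_1_in_SU: "mat 1 \<in> SU"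
proof -
  have "adjoint_mat (mat 1 :: complex^'d^'d) = mat 1"
    by (simp add: adjoint_mat_def mat_def vec_eq_iff)
  then show ?thesis
    unfolding SU_def by (simp add: matrix_mul_lid det_I)
qed

lemma unit_opf_neq_0: "(\<u> :: 'd::finite opf) \<noteq> 0"
  by (auto simp: unit_opf_def fun_eq_iff)

lemma opf_comp_in_span:
  assumes "OPF_set F" "H \<in> span F" "U \<in> SU"
  shows "opf_comp H U \<in> span F"
proof -
  have "opf_comp H U \<in> span ((\<lambda>G. opf_comp G U) ` F)"
    using assms(2) span_linear_image[OF linear_opf_comp] by blast
  also have "\<dots> \<subseteq> span F"
    using assms(1,3) by (intro span_mono) (auto simp: OPF_set_def)
  finally show ?thesis .
qed

lemma unit_opf_in_span: "OPF_set F \<Longrightarrow> \<u> \<in> span F"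
  by (simp add: OPF_set_def span_base)

lemma finite_fbasis:
  assumes "OPF_set F" "fbasis B (fspan F)"
  shows "finite B"
proof -
  obtain B' where "finite B'" "span B' = span F"
    using assms(1) by (auto simp: OPF_set_def fspan_eq_span)
  moreover have "independent B" "span B = span F"
    using assms(2) by (simp_all add: fbasis_iff fspan_eq_span)
  ultimately show ?thesis
    using independent_span_bound[of B' B] span_superset[of B] by auto
qed

lemma invariant_in_span_unit:
  assumes "trivial_once F" "H \<in> span F" "\<And>U. U \<in> SU \<Longrightarrow> opf_comp H U = H"
  obtains c where "H = c *\<^sub>R \<u>"
proof -
  have "H \<in> span {\<u>}"
    using assms unfolding trivial_once_def fspan_eq_span by blast
  then show ?thesis
    using that by (auto simp: span_singleton)
qed

locale opf_composite =
  fixes FA :: "('a::finite) opf set" and FB :: "('b::finite) opf set"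
    and FAB :: "('a \<times> 'b) opf set" and star :: "'a opf \<Rightarrow> 'b opf \<Rightarrow> ('a \<times> 'b) opf"
  assumes OPF_set_left: "OPF_set FA" and OPF_set_right: "OPF_set FB"
    and OPF_product: "OPF_product FA FB FAB star"
begin

lemmas unit_in_span_left = unit_opf_in_span[OF OPF_set_left]
lemmas unit_in_span_right = unit_opf_in_span[OF OPF_set_right]
lemmas opf_comp_in_span_left = opf_comp_in_span[OF OPF_set_left]
lemmas opf_comp_in_span_right = opf_comp_in_span[OF OPF_set_right]

lemma star_unit_unit: "star \<u> \<u> = \<u>"
  using OPF_product by (simp add: OPF_product_def)

lemma bilinear_on_spans: "bilinear_on (span FA) (span FB) star"
  using OPF_product by unfold_locales (auto simp: OPF_product_def fspan_eq_span linear_combination_fun_eq)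

lemma star_opf_comp_kron:
  assumes "F \<in> span FA" "G \<in> span FB" "UA \<in> SU" "UB \<in> SU"
  shows "opf_comp (star F G) (kron UA UB) = star (opf_comp F UA) (opf_comp G UB)"
proof (rule bilinear_on_eq_on_spans[OF _ _ _ assms(1,2)])
  show "bilinear_on (span FA) (span FB) (\<lambda>F G. opf_comp (star F G) (kron UA UB))"
    using bilinear_on.bilinear_on_compose[OF bilinear_on_spans linear_opf_comp linear_id linear_id]
    by (simp add: id_def)
  have "(\<lambda>F. opf_comp F UA) ` span FA \<subseteq> span FA" "(\<lambda>G. opf_comp G UB) ` span FB \<subseteq> span FB"
    using opf_comp_in_span_left opf_comp_in_span_right assms(3,4) by auto
  from bilinear_on.bilinear_on_compose[OF bilinear_on_spans linear_id linear_opf_comp linear_opf_comp this]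
  show "bilinear_on (span FA) (span FB) (\<lambda>F G. star (opf_comp F UA) (opf_comp G UB))"
    by (simp add: id_def)
  show "opf_comp (star F G) (kron UA UB) = star (opf_comp F UA) (opf_comp G UB)"
    if "F \<in> FA" "G \<in> FB" for F G
    using OPF_product that assms(3,4) by (simp add: OPF_product_def)
qed

lemma kron_invariant_eq_star_unit_left:
  assumes "trivial_once FA"
    and "product_basis (span FA) (span FB) star BA BB"
    and G: "G \<in> span ((\<lambda>(x, y). star x y) ` (BA \<times> BB))"
    and inv: "\<And>UA UB. UA \<in> SU \<Longrightarrow> UB \<in> SU \<Longrightarrow> opf_comp G (kron UA UB) = G"
  obtains H where "H \<in> span FB" "G = star \<u> H"
proof -
  interpret product_basis "span FA" "span FB" star BA BB by fact
  obtain A where A: "\<And>y. y \<in> BB \<Longrightarrow> A y \<in> span FA" and G_eq: "G = (\<Sum>y\<in>BB. star (A y) y)"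
    using span_products_decompose[OF G] by blast
  have A_invariant: "opf_comp (A y) U = A y" if "y \<in> BB" "U \<in> SU" for y U
  proof -
    have "(\<Sum>y\<in>BB. star (opf_comp (A y) U) y) = opf_comp G (kron U (mat 1))"
      unfolding G_eq linear_sum[OF linear_opf_comp]
      by (intro sum.cong refl) (simp add: star_opf_comp_kron A basis_right_mem that(2) mat_1_in_SU)
    also have "\<dots> = (\<Sum>y\<in>BB. star (A y) y)"
      using inv[OF that(2) mat_1_in_SU] G_eq by simp
    finally have eq: "(\<Sum>y\<in>BB. star (opf_comp (A y) U) y) = (\<Sum>y\<in>BB. star (A y) y)" .
    have "\<And>y. y \<in> BB \<Longrightarrow> opf_comp (A y) U \<in> span FA"
      using A that(2) by (simp add: opf_comp_in_span_left)
    from sum_star_unique[OF this A eq \<open>y \<in> BB\<close>] show ?thesis .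
  qed
  have "\<forall>y\<in>BB. \<exists>c. A y = c *\<^sub>R \<u>"
    using invariant_in_span_unit[OF assms(1) A A_invariant] by metis
  then obtain a where a: "\<And>y. y \<in> BB \<Longrightarrow> A y = a y *\<^sub>R \<u>"
    by metis
  have "G = (\<Sum>y\<in>BB. a y *\<^sub>R star \<u> y)"
    unfolding G_eq by (intro sum.cong refl) (simp add: a scaleR_left unit_in_span_left basis_right_mem)
  also have "\<dots> = star \<u> (\<Sum>y\<in>BB. a y *\<^sub>R y)"
    by (rule linear_combination_right[OF finite_BB basis_right_mem unit_in_span_left, symmetric])
  finally show ?thesis
    by (rule that[rotated]) (simp add: basis_right_mem span_sum span_scale)
qed

lemma kron_invariant_in_span_unit:
  assumes "trivial_once FA" "trivial_once FB"
    and basis: "product_basis (span FA) (span FB) star BA BB"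
    and "G \<in> span ((\<lambda>(x, y). star x y) ` (BA \<times> BB))"
    and inv: "\<And>UA UB. UA \<in> SU \<Longrightarrow> UB \<in> SU \<Longrightarrow> opf_comp G (kron UA UB) = G"
  obtains c where "G = c *\<^sub>R \<u>"
proof -
  interpret product_basis "span FA" "span FB" star BA BB by fact
  obtain H where H: "H \<in> span FB" and G_eq: "G = star \<u> H"
    using kron_invariant_eq_star_unit_left[OF assms(1,3,4) inv] .
  have "opf_comp H U = H" if "U \<in> SU" for U
  proof (rule star_right_inj[OF unit_in_span_left unit_opf_neq_0])
    show "opf_comp H U \<in> span FB"
      using H that by (rule opf_comp_in_span_right)
    show "star \<u> (opf_comp H U) = star \<u> H"
      using star_opf_comp_kron[OF unit_in_span_left H mat_1_in_SU that] inv[OF mat_1_in_SU that]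
      by (simp add: G_eq)
  qed (fact H)
  then obtain b where "H = b *\<^sub>R \<u>"
    using invariant_in_span_unit[OF assms(2) H] by blast
  then have "G = b *\<^sub>R \<u>"
    by (simp add: G_eq scaleR_right unit_in_span_left unit_in_span_right star_unit_unit)
  then show ?thesis by (rule that)
qed

end

theorem mainTheorem5:
  fixes FA :: "('a::finite) opf set" and FB :: "('b::finite) opf set"
    and FAB :: "('a \<times> 'b) opf set"
    and star :: "'a opf \<Rightarrow> 'b opf \<Rightarrow> ('a \<times> 'b) opf"
    and WA :: "'a opf set" and WB :: "'b opf set" and WAB :: "('a \<times> 'b) opf set"
    and BA :: "'a opf set" and BB :: "'b opf set"
  assumes "OPF_set FA" and "OPF_set FB" and "OPF_set FAB"
    and "trivial_once FA" and "trivial_once FB" and "trivial_once FAB"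
    and "affine_rep_space FA WA" and "affine_rep_space FB WB" and "affine_rep_space FAB WAB"
    and "OPF_product FA FB FAB star"
    and "\<exists>G\<in>WAB. G \<noteq> 0 \<and> (\<forall>UA\<in>SU. \<forall>UB\<in>SU. opf_comp G (kron UA UB) = G)"
    and "fbasis BA (fspan FA)" and "fbasis BB (fspan FB)"
  shows "\<not> (inj_on (\<lambda>(F, G). star F G) (BA \<times> BB) \<and>
             fbasis ((\<lambda>(F, G). star F G) ` (BA \<times> BB)) (fspan FAB))"
proof
  assume products: "inj_on (\<lambda>(F, G). star F G) (BA \<times> BB) \<and>
    fbasis ((\<lambda>(F, G). star F G) ` (BA \<times> BB)) (fspan FAB)"
  interpret opf_composite FA FB FAB star
    using assms(1,2,10) by unfold_locales
  have basis: "product_basis (span FA) (span FB) star BA BB"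
    using bilinear_on_spans finite_fbasis[OF assms(1,12)] finite_fbasis[OF assms(2,13)]
      assms(12,13) products
    by (simp add: product_basis_def product_basis_axioms_def fbasis_iff fspan_eq_span)
  obtain G where G: "G \<in> WAB" "G \<noteq> 0"
    and inv: "\<And>UA UB. UA \<in> SU \<Longrightarrow> UB \<in> SU \<Longrightarrow> opf_comp G (kron UA UB) = G"
    using assms(11) by blast
  have WAB: "subspace WAB" "WAB \<subseteq> span FAB" "\<u> \<notin> WAB"
    using assms(9) by (auto simp: affine_rep_space_def fsubspace_eq_subspace fspan_eq_span)
  then have "G \<in> span ((\<lambda>(F, G). star F G) ` (BA \<times> BB))"
    using G(1) products by (auto simp: fbasis_iff fspan_eq_span)
  then obtain c where "G = c *\<^sub>R \<u>"
    using kron_invariant_in_span_unit[OF assms(4,5) basis _ inv] by blast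
  with G have "\<u> = inverse c *\<^sub>R G" "c \<noteq> 0"
    by auto
  then show False
    using WAB G(1) subspace_scale by metis
qed

end
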